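(* Let $E\in M_n(\mathbb{FT})$ be an idempotent all of whose diagonal entries equal $0$. Choose a set $\{c_1,\dots,c_k\}$ of representatives of the critical classes of $E$, and let $M$ be the $k\times n$ matrix over $\mathbb{T}$, with rows indexed by $c_1,\dots,c_k$, defined by $M_{c_i,j}=0$ if $j=c_i$ and $M_{c_i,j}=-\infty$ otherwise. Then (i) $F=M\otimes E\otimes M^T$ (which is the $k\times k$ submatrix of $E$ with rows and columns indexed by $c_1,\dots,c_k$) is an idempotent of rank $k$ in $M_k(\mathbb{FT})$; (ii) the map $\phi:A\mapsto M\otimes A\otimes M^T$ restricts to an isomorphism of groups from the $\mathcal H$-class of $E$ in $M_n(\mathbb{FT})$ onto the $\mathcal H$-class of $F$ in $M_k(\mathbb{FT})$.
   Context: $\mathbb{FT}$ is $\mathbb{R}$ with $a\oplus b=\max(a,b)$, $a\otimes b=a+b$; $\mathbb{T}=\mathbb{R}\cup\{-\infty\}$ with the obvious extensions. Matrices are multiplied by $(A\otimes B)_{i,j}=\bigoplus_k A_{i,k}\otimes B_{k,j}$; $M_n(\mathbb{FT})$ is the semigroup of real $n\times n$ matrices. For $A\in M_n(\mathbb{FT})$, $\Gamma_A$ is the complete weighted digraph on $\{1,\dots,n\}$ with an edge $j\to i$ of weight $A_{i,j}$; the maximum cycle mean of $A$ is the maximum of the (arithmetic) average edge weights over all closed paths; the critical graph consists of all nodes and edges lying on a closed path whose average weight equals the maximum cycle mean; its nodes are critical nodes, and the critical classes are the strongly connected components of the critical graph (equivalence classes of critical nodes). $C(A)$ is the set of finite componentwise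 maxima of columns of $A$ shifted by real constants; the rank of an idempotent $E$ is the minimal cardinality of a generating set of $C(E)$ under componentwise max and adding real constants. Green's relations on a semigroup $S$: $a\,\mathcal{R}\,b$ iff $aS^1=bS^1$, $a\,\mathcal{L}\,b$ iff $S^1a=S^1b$, $\mathcal{H}=\mathcal{L}\cap\mathcal{R}$. *)

theory Defs
  imports Complex_Main "HOL-Library.Extended_Real"
begin

text \<open>Real n x n matrices (the semigroup M_n(FT)) are represented as functions
 nat => nat => real, with indices 0..n-1; entries outside are fixed to 0 so that
 equality of matrices is equality of functions.\<close>

type_synonym rmat = "nat \<Rightarrow> nat \<Rightarrow> real"
type_synonym emat = "nat \<Rightarrow> nat \<Rightarrow> ereal"

definition mats :: "nat \<Rightarrow> rmat set" where
  "mats n = {A. \<forall>i j. (n \<le> i \<or> n \<le> j) \<longrightarrow> A i j = 0}"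

definition tmul :: "nat \<Rightarrow> rmat \<Rightarrow> rmat \<Rightarrow> rmat" where
  "tmul n A B = (\<lambda>i j. if i < n \<and> j < n then Max {A i l + B l j | l. l < n} else 0)"

definition idempotent :: "nat \<Rightarrow> rmat \<Rightarrow> bool" where
  "idempotent n E \<longleftrightarrow> E \<in> mats n \<and> tmul n E E = E"

text \<open>Max-plus product over T = R \<union> {-\<infinity>} (ereal, only finite and -\<infinity> values occur):
 (A \<otimes> B)_{i,j} = max_{t < l} (A_{i,t} + B_{t,j}), l the inner dimension.\<close>
definition emul :: "nat \<Rightarrow> emat \<Rightarrow> emat \<Rightarrow> emat" where
  "emul l A B = (\<lambda>i j. Max {A i t + B t j | t. t < l})"

definition etrans :: "emat \<Rightarrow> emat" where
  "etrans A = (\<lambda>i j. A j i)"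

definition embed :: "rmat \<Rightarrow> emat" where
  "embed A = (\<lambda>i j. ereal (A i j))"

definition selmat :: "nat list \<Rightarrow> emat" where
  "selmat cs = (\<lambda>i j. if i < length cs \<and> j = cs ! i then 0 else -\<infinity>)"

definition phi :: "nat \<Rightarrow> nat list \<Rightarrow> rmat \<Rightarrow> rmat" where
  "phi n cs A = (\<lambda>i j. if i < length cs \<and> j < length cs
      then real_of_ereal (emul n (emul n (selmat cs) (embed A)) (etrans (selmat cs)) i j)
      else 0)"

text \<open>A closed path in Gamma_A is a nonempty list of nodes [v_0,...,v_{m-1}] (each < n),
 traversing edges v_t -> v_{(t+1) mod m}; the edge j -> i has weight A i j.\<close>
definition closed_path :: "nat \<Rightarrow> nat list \<Rightarrow> bool" where
  "closed_path n p \<longleftrightarrow> p \<noteq> [] \<and> set p \<subseteq> {..<n}"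

definition cp_weight :: "rmat \<Rightarrow> nat list \<Rightarrow> real" where
  "cp_weight A p = (\<Sum>t<length p. A (p ! ((t + 1) mod length p)) (p ! t))"

definition cp_mean :: "rmat \<Rightarrow> nat list \<Rightarrow> real" where
  "cp_mean A p = cp_weight A p / real (length p)"

definition max_cycle_mean :: "nat \<Rightarrow> rmat \<Rightarrow> real" where
  "max_cycle_mean n A = Sup {cp_mean A p | p. closed_path n p}"

definition critical_path :: "nat \<Rightarrow> rmat \<Rightarrow> nat list \<Rightarrow> bool" where
  "critical_path n A p \<longleftrightarrow> closed_path n p \<and> cp_mean A p = max_cycle_mean n A"

definition critical_node :: "nat \<Rightarrow> rmat \<Rightarrow> nat \<Rightarrow> bool" where
  "critical_node n A i \<longleftrightarrow> (\<exists>p. critical_path n A p \<and> i \<in> set p)"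

text \<open>Critical edges j -> i, as pairs (j, i).\<close>
definition critical_edges :: "nat \<Rightarrow> rmat \<Rightarrow> (nat \<times> nat) set" where
  "critical_edges n A = {(j, i). \<exists>p t. critical_path n A p \<and> t < length p \<and>
       p ! t = j \<and> p ! ((t + 1) mod length p) = i}"

definition same_crit_class :: "nat \<Rightarrow> rmat \<Rightarrow> nat \<Rightarrow> nat \<Rightarrow> bool" where
  "same_crit_class n A i j \<longleftrightarrow> critical_node n A i \<and> critical_node n A j \<and>
     (i, j) \<in> (critical_edges n A)\<^sup>* \<and> (j, i) \<in> (critical_edges n A)\<^sup>*"

definition crit_reps :: "nat \<Rightarrow> rmat \<Rightarrow> nat list \<Rightarrow> bool" where
  "crit_reps n A cs \<longleftrightarrow> (\<forall>i < length cs. critical_node n A (cs ! i)) \<and>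
     (\<forall>i < length cs. \<forall>j < length cs. same_crit_class n A (cs ! i) (cs ! j) \<longrightarrow> i = j) \<and>
     (\<forall>c. critical_node n A c \<longrightarrow> (\<exists>i < length cs. same_crit_class n A c (cs ! i)))"

text \<open>Vectors in R^n are functions nat => real vanishing at indices >= n.
 tspan n S = all finite (nonempty) componentwise maxima of elements of S shifted by reals,
 i.e. the closure of S under \<oplus> and adding real constants.\<close>
definition tspan :: "nat \<Rightarrow> (nat \<Rightarrow> real) set \<Rightarrow> (nat \<Rightarrow> real) set" where
  "tspan n S = {v. \<exists>(m::nat) vs (c::nat \<Rightarrow> real). 0 < m \<and> (\<forall>t<m. vs t \<in> S) \<and>
      v = (\<lambda>i. if i < n then Max {vs t i + c t | t. t < m} else 0)}"

definition col :: "rmat \<Rightarrow> nat \<Rightarrow> (nat \<Rightarrow> real)" where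
  "col A j = (\<lambda>i. A i j)"

definition colspace :: "nat \<Rightarrow> rmat \<Rightarrow> (nat \<Rightarrow> real) set" where
  "colspace n A = tspan n {col A j | j. j < n}"

definition trank :: "nat \<Rightarrow> rmat \<Rightarrow> nat" where
  "trank n E = (LEAST r. \<exists>S. finite S \<and> S \<subseteq> colspace n E \<and> tspan n S = colspace n E \<and> card S = r)"

definition right_ideal1 :: "nat \<Rightarrow> rmat \<Rightarrow> rmat set" where
  "right_ideal1 n a = insert a {tmul n a s | s. s \<in> mats n}"

definition left_ideal1 :: "nat \<Rightarrow> rmat \<Rightarrow> rmat set" where
  "left_ideal1 n a = insert a {tmul n s a | s. s \<in> mats n}"

definition greenR :: "nat \<Rightarrow> rmat \<Rightarrow> rmat \<Rightarrow> bool" where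
  "greenR n a b \<longleftrightarrow> right_ideal1 n a = right_ideal1 n b"

definition greenL :: "nat \<Rightarrow> rmat \<Rightarrow> rmat \<Rightarrow> bool" where
  "greenL n a b \<longleftrightarrow> left_ideal1 n a = left_ideal1 n b"

definition Hclass :: "nat \<Rightarrow> rmat \<Rightarrow> rmat set" where
  "Hclass n e = {a \<in> mats n. greenR n a e \<and> greenL n a e}"

end

theory Submission
  imports Defs
begin

text \<open>
  Idempotency gives \<open>E\<^sub>i\<^sub>j + E\<^sub>j\<^sub>l \<le> E\<^sub>i\<^sub>l\<close>, so with the zero diagonal every closed path has
  weight \<open>\<le> 0\<close>, the maximum cycle mean is \<open>0\<close>, and \<open>i\<close>, \<open>j\<close> lie in one critical class iff
  \<open>E\<^sub>i\<^sub>j + E\<^sub>j\<^sub>i = 0\<close>. Writing \<open>c(i)\<close> for the representative of the class of \<open>i\<close>, the map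
  \<open>G \<mapsto> (E\<^bsub>i c(i)\<^esub> + G\<^bsub>c(i) c(j)\<^esub> + E\<^bsub>c(j) j\<^esub>)\<^sub>i\<^sub>j\<close> is multiplicative and inverts
  \<open>A \<mapsto> M A M\<^sup>T\<close> on the local monoid \<open>E M\<^sub>n E\<close>, which is therefore isomorphic to
  \<open>M\<^sub>k\<close> with \<open>E \<mapsto> F\<close>. The \<open>\<H>\<close>-class of an idempotent is the group of units of its local
  monoid, so \<open>\<phi>\<close> maps the \<open>\<H>\<close>-class of \<open>E\<close> isomorphically onto that of \<open>F\<close>. Finally \<open>F\<close>
  has zero diagonal and \<open>F\<^sub>a\<^sub>b + F\<^sub>b\<^sub>a < 0\<close> for \<open>a \<noteq> b\<close>; this makes every column of \<open>F\<close>
  extremal in the column space, so that any generating set needs \<open>k\<close> elements.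
\<close>

lemma setcompr_lessThan_image: "{f t | t. t < (l::nat)} = f ` {..<l}"
  by auto

lemma Max_setcompr_ge:
  fixes f :: "nat \<Rightarrow> 'a::linorder"
  shows "t < l \<Longrightarrow> f t \<le> Max {f t | t. t < l}"
  unfolding setcompr_lessThan_image by (rule Max_ge) auto

lemma Max_setcompr_attained:
  fixes f :: "nat \<Rightarrow> 'a::linorder"
  assumes "0 < l"
  shows "\<exists>t<l. Max {f t | t. t < l} = f t"
proof -
  have "Max (f ` {..<l}) \<in> f ` {..<l}" by (rule Max_in) (use assms in auto)
  then show ?thesis unfolding setcompr_lessThan_image by auto
qed

lemma tmul_in_mats: "tmul n A B \<in> mats n"
  by (auto simp: mats_def tmul_def)

lemma tmul_ge: "i < n \<Longrightarrow> t < n \<Longrightarrow> j < n \<Longrightarrow> A i t + B t j \<le> tmul n A B i j"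
  using Max_setcompr_ge[of t n "\<lambda>t. A i t + B t j"] by (simp add: tmul_def)

lemma tmul_attained: "i < n \<Longrightarrow> j < n \<Longrightarrow> \<exists>t<n. tmul n A B i j = A i t + B t j"
  using Max_setcompr_attained[of n "\<lambda>t. A i t + B t j"] by (simp add: tmul_def)

lemma tmul_eqI:
  assumes "i < n" "j < n" "\<And>t. t < n \<Longrightarrow> A i t + B t j \<le> x"
    and "t0 < n" "A i t0 + B t0 j = x"
  shows "tmul n A B i j = x"
  by (metis assms antisym tmul_attained tmul_ge)

lemma tmul_assoc: "tmul n (tmul n A B) C = tmul n A (tmul n B C)"
proof (intro ext)
  fix i j
  show "tmul n (tmul n A B) C i j = tmul n A (tmul n B C) i j"
  proof (cases "i < n \<and> j < n")
    case False
    then show ?thesis by (auto simp: tmul_def)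
  next
    case True
    have "tmul n (tmul n A B) C i j \<le> tmul n A (tmul n B C) i j"
    proof -
      obtain t where t: "t < n" "tmul n (tmul n A B) C i j = tmul n A B i t + C t j"
        using tmul_attained True by blast
      obtain s where s: "s < n" "tmul n A B i t = A i s + B s t"
        using tmul_attained True t by blast
      have "B s t + C t j \<le> tmul n B C s j"
        and "A i s + tmul n B C s j \<le> tmul n A (tmul n B C) i j"
        using tmul_ge s t True by blast+
      then show ?thesis using t s by linarith
    qed
    moreover have "tmul n A (tmul n B C) i j \<le> tmul n (tmul n A B) C i j"
    proof -
      obtain s where s: "s < n" "tmul n A (tmul n B C) i j = A i s + tmul n B C s j"
        using tmul_attained True by blast
      obtain t where t: "t < n" "tmul n B C s j = B s t + C t j"
        using tmul_attained True s by blast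
      have "A i s + B s t \<le> tmul n A B i t"
        and "tmul n A B i t + C t j \<le> tmul n (tmul n A B) C i j"
        using tmul_ge s t True by blast+
      then show ?thesis using t s by linarith
    qed
    ultimately show ?thesis by simp
  qed
qed

section \<open>The \<open>\<H>\<close>-class of an idempotent\<close>

definition local_monoid :: "nat \<Rightarrow> rmat \<Rightarrow> rmat set" where
  "local_monoid n e = {A \<in> mats n. tmul n e A = A \<and> tmul n A e = A}"

lemma right_ideal1_eq_iff:
  assumes "idempotent m e" "A \<in> mats m"
  shows "right_ideal1 m A = right_ideal1 m e \<longleftrightarrow>
    (\<exists>x\<in>mats m. A = tmul m e x) \<and> (\<exists>y\<in>mats m. e = tmul m A y)"
proof
  have em: "e \<in> mats m" and ee: "tmul m e e = e" using assms by (auto simp: idempotent_def)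
  assume R: "right_ideal1 m A = right_ideal1 m e"
  have "A \<in> right_ideal1 m e" "e \<in> right_ideal1 m A"
    using R right_ideal1_def[of m A] right_ideal1_def[of m e] by blast+
  then show "(\<exists>x\<in>mats m. A = tmul m e x) \<and> (\<exists>y\<in>mats m. e = tmul m A y)"
    using em ee by (auto simp: right_ideal1_def) (metis em ee)+
next
  assume "(\<exists>x\<in>mats m. A = tmul m e x) \<and> (\<exists>y\<in>mats m. e = tmul m A y)"
  then obtain x y where x: "x \<in> mats m" "A = tmul m e x" and y: "y \<in> mats m" "e = tmul m A y"
    by blast
  have "tmul m A s = tmul m e (tmul m x s)" "tmul m e s = tmul m A (tmul m y s)" for s
    using x y tmul_assoc by metis+
  then show "right_ideal1 m A = right_ideal1 m e"
    unfolding right_ideal1_def using x y tmul_in_mats by blast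
qed

lemma left_ideal1_eq_iff:
  assumes "idempotent m e" "A \<in> mats m"
  shows "left_ideal1 m A = left_ideal1 m e \<longleftrightarrow>
    (\<exists>x\<in>mats m. A = tmul m x e) \<and> (\<exists>y\<in>mats m. e = tmul m y A)"
proof
  have em: "e \<in> mats m" and ee: "tmul m e e = e" using assms by (auto simp: idempotent_def)
  assume L: "left_ideal1 m A = left_ideal1 m e"
  have "A \<in> left_ideal1 m e" "e \<in> left_ideal1 m A"
    using L left_ideal1_def[of m A] left_ideal1_def[of m e] by blast+
  then show "(\<exists>x\<in>mats m. A = tmul m x e) \<and> (\<exists>y\<in>mats m. e = tmul m y A)"
    using em ee by (auto simp: left_ideal1_def) (metis em ee)+
next
  assume "(\<exists>x\<in>mats m. A = tmul m x e) \<and> (\<exists>y\<in>mats m. e = tmul m y A)"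
  then obtain x y where x: "x \<in> mats m" "A = tmul m x e" and y: "y \<in> mats m" "e = tmul m y A"
    by blast
  have "tmul m s A = tmul m (tmul m s x) e" "tmul m s e = tmul m (tmul m s y) A" for s
    using x y tmul_assoc by metis+
  then show "left_ideal1 m A = left_ideal1 m e"
    unfolding left_ideal1_def using x y tmul_in_mats by blast
qed

lemma Hclass_idempotent_iff:
  assumes "idempotent m e"
  shows "A \<in> Hclass m e \<longleftrightarrow> A \<in> mats m
    \<and> (\<exists>x\<in>mats m. A = tmul m e x) \<and> (\<exists>y\<in>mats m. e = tmul m A y)
    \<and> (\<exists>x\<in>mats m. A = tmul m x e) \<and> (\<exists>y\<in>mats m. e = tmul m y A)"
  using right_ideal1_eq_iff[OF assms] left_ideal1_eq_iff[OF assms]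
  by (auto simp: Hclass_def greenR_def greenL_def)

lemma Hclass_subset_local_monoid:
  assumes "idempotent m e"
  shows "Hclass m e \<subseteq> local_monoid m e"
proof
  fix A assume "A \<in> Hclass m e"
  then obtain x x' where "A \<in> mats m" "A = tmul m e x" "A = tmul m x' e"
    using Hclass_idempotent_iff[OF assms] by blast
  moreover have "tmul m e e = e" using assms by (simp add: idempotent_def)
  ultimately show "A \<in> local_monoid m e"
    unfolding local_monoid_def by (metis (mono_tags, lifting) mem_Collect_eq tmul_assoc)
qed

lemma Hclass_iff_unit_of_local_monoid:
  assumes e: "idempotent m e"
  shows "A \<in> Hclass m e \<longleftrightarrow> A \<in> local_monoid m e
    \<and> (\<exists>Y\<in>local_monoid m e. tmul m A Y = e) \<and> (\<exists>Y\<in>local_monoid m e. tmul m Y A = e)"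
proof
  have ee: "tmul m e e = e" using e by (simp add: idempotent_def)
  assume H: "A \<in> Hclass m e"
  then have A: "A \<in> local_monoid m e" using Hclass_subset_local_monoid[OF e] by blast
  then have EA: "tmul m e A = A" and AE: "tmul m A e = A" by (auto simp: local_monoid_def)
  obtain y y' where y: "e = tmul m A y" and y': "e = tmul m y' A"
    using H Hclass_idempotent_iff[OF e] by blast
  have "tmul m e (tmul m e X) = tmul m e X" for X
    using ee by (simp flip: tmul_assoc)
  then have in_lm: "tmul m (tmul m e z) e \<in> local_monoid m e" for z
    unfolding local_monoid_def using ee by (simp add: tmul_in_mats tmul_assoc)
  have "tmul m A (tmul m (tmul m e y) e) = tmul m (tmul m (tmul m A e) y) e"
    by (simp only: tmul_assoc)
  also have "\<dots> = e" using AE y ee by simp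
  moreover have "tmul m (tmul m (tmul m e y') e) A = tmul m e (tmul m y' (tmul m e A))"
    by (simp only: tmul_assoc)
  moreover have "\<dots> = e" using EA y' ee by simp
  ultimately show "A \<in> local_monoid m e
    \<and> (\<exists>Y\<in>local_monoid m e. tmul m A Y = e) \<and> (\<exists>Y\<in>local_monoid m e. tmul m Y A = e)"
    using A in_lm by metis
next
  assume "A \<in> local_monoid m e
    \<and> (\<exists>Y\<in>local_monoid m e. tmul m A Y = e) \<and> (\<exists>Y\<in>local_monoid m e. tmul m Y A = e)"
  then obtain Y Y' where A: "A \<in> local_monoid m e" and Y: "Y \<in> local_monoid m e" "tmul m A Y = e"
    and Y': "Y' \<in> local_monoid m e" "tmul m Y' A = e"
    by blast
  have "A \<in> mats m" "A = tmul m e A" "A = tmul m A e" "Y \<in> mats m" "Y' \<in> mats m"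
    using A Y(1) Y'(1) by (auto simp: local_monoid_def)
  then show "A \<in> Hclass m e" unfolding Hclass_idempotent_iff[OF e] using Y(2) Y'(2) by metis
qed

section \<open>Rank of a matrix with strictly negative 2-cycles\<close>

lemma col_in_colspace:
  assumes "F \<in> mats k" "j < k"
  shows "col F j \<in> colspace k F"
proof -
  have "col F j = (\<lambda>i. if i < k then Max {col F j i + 0 | t. t < (1::nat)} else 0)"
    using assms(1) by (auto simp: col_def mats_def fun_eq_iff)
  then show ?thesis
    unfolding colspace_def tspan_def using assms(2)
    by (intro CollectI exI[of _ "1::nat"] exI[of _ "\<lambda>t. col F j"] exI[of _ "\<lambda>t. 0::real"]) auto
qed

context
  fixes k :: nat and F :: rmat
  assumes F_mats: "F \<in> mats k"
    and F_diag: "\<forall>a<k. F a a = 0"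
    and F_2cycle: "\<forall>a<k. \<forall>b<k. a \<noteq> b \<longrightarrow> F a b + F b a < 0"
begin

lemma shifted_cols_eq_imp_eq:
  assumes "a < k" "b < k" "\<forall>i<k. F i a - c = F i b - d"
  shows "a = b"
proof (rule ccontr)
  assume "a \<noteq> b"
  with assms F_2cycle have "F a b + F b a < 0" by blast
  moreover have "F a a - c = F a b - d" "F b a - c = F b b - d" using assms by auto
  ultimately show False using F_diag assms by auto
qed

lemma generating_set_contains_shifted_col:
  assumes S: "S \<subseteq> colspace k F" "tspan k S = colspace k F" and j: "j < k"
  shows "\<exists>s\<in>S. \<exists>c. \<forall>i<k. s i = F i j - c"
proof -
  have "col F j \<in> tspan k S" using col_in_colspace[OF F_mats j] S by simp
  then obtain m :: nat and vs c where m: "0 < m" and vsS: "\<forall>t<m. vs t \<in> S"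
    and Fj: "\<And>i. i < k \<Longrightarrow> F i j = Max {vs t i + c t | t. t < m}"
    unfolding tspan_def by (force simp: fun_eq_iff col_def)
  have upper: "vs t i + c t \<le> F i j" if "i < k" "t < m" for i t
    using Fj that Max_setcompr_ge by simp
  obtain t where t: "t < m" "F j j = vs t j + c t"
    using Max_setcompr_attained[OF m, of "\<lambda>t. vs t j + c t"] Fj[OF j] by auto
  have "vs t \<in> colspace k F" using vsS t S by blast
  then obtain m' :: nat and ws d where m': "0 < m'" and wsS: "\<forall>u<m'. ws u \<in> {col F l | l. l < k}"
    and vt: "\<And>i. i < k \<Longrightarrow> vs t i = Max {ws u i + d u | u. u < m'}"
    unfolding colspace_def tspan_def by (force simp: fun_eq_iff)
  obtain u where u: "u < m'" "vs t j = ws u j + d u"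
    using Max_setcompr_attained[OF m', of "\<lambda>u. ws u j + d u"] vt[OF j] by auto
  obtain l where l: "l < k" "ws u = col F l" using wsS u by blast
  have lower: "F i l + d u \<le> vs t i" if "i < k" for i
    using vt[OF that] Max_setcompr_ge[OF u(1), of "\<lambda>u. ws u i + d u"] l by (simp add: col_def)
  have "d u + c t \<le> F l j" using lower[OF l(1)] upper[OF l(1) t(1)] F_diag l by simp
  moreover have "F j l + d u + c t = 0" using t u l F_diag j by (simp add: col_def)
  ultimately have "l = j"
    using F_2cycle l(1) j by (metis add.commute add_le_cancel_left add.assoc not_le)
  then have "d u = - c t" using \<open>F j l + d u + c t = 0\<close> F_diag j by simp
  have "vs t i = F i j - c t" if "i < k" for i
    using lower[OF that] upper[OF that t(1)] \<open>l = j\<close> \<open>d u = - c t\<close> by simp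
  then show ?thesis using vsS t by blast
qed

lemma trank_eq_dim: "trank k F = k"
  unfolding trank_def
proof (rule Least_equality)
  let ?S = "col F ` {..<k}"
  have "inj_on (col F) {..<k}"
    by (rule inj_onI) (rule shifted_cols_eq_imp_eq[of _ _ 0 0], auto simp: col_def fun_eq_iff)
  then have "card ?S = k" by (simp add: card_image)
  moreover have "tspan k ?S = colspace k F"
    unfolding colspace_def by (simp only: setcompr_lessThan_image)
  moreover have "?S \<subseteq> colspace k F" using col_in_colspace[OF F_mats] by blast
  ultimately show "\<exists>S. finite S \<and> S \<subseteq> colspace k F \<and> tspan k S = colspace k F \<and> card S = k"
    by blast
next
  fix r assume "\<exists>S. finite S \<and> S \<subseteq> colspace k F \<and> tspan k S = colspace k F \<and> card S = r"
  then obtain S where S: "finite S" "S \<subseteq> colspace k F" "tspan k S = colspace k F" "card S = r"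
    by blast
  obtain f where f: "\<And>j. j < k \<Longrightarrow> f j \<in> S \<and> (\<exists>c. \<forall>i<k. f j i = F i j - c)"
    using generating_set_contains_shifted_col[OF S(2,3)] by metis
  have "inj_on f {..<k}"
  proof (rule inj_onI)
    fix a b assume "a \<in> {..<k}" "b \<in> {..<k}" "f a = f b"
    moreover obtain c d where "\<forall>i<k. f a i = F i a - c" "\<forall>i<k. f b i = F i b - d"
      using f \<open>a \<in> {..<k}\<close> \<open>b \<in> {..<k}\<close> by (meson lessThan_iff)
    ultimately show "a = b" by (intro shifted_cols_eq_imp_eq[of a b c d]) auto
  qed
  moreover have "f ` {..<k} \<subseteq> S" using f by blast
  ultimately show "k \<le> r" using card_inj_on_le[OF _ _ S(1)] S(4) by fastforce
qed

end

section \<open>The critical graph of an idempotent with zero diagonal\<close>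

definition cycle_node :: "nat list \<Rightarrow> nat \<Rightarrow> nat" where
  "cycle_node p s = p ! (s mod length p)"

lemma cycle_node_lt: "closed_path n p \<Longrightarrow> cycle_node p s < n"
  unfolding closed_path_def cycle_node_def
  by (metis length_greater_0_conv lessThan_iff mod_less_divisor nth_mem subsetD)

lemma cp_weight_cycle_node:
  "cp_weight A p = (\<Sum>s\<in>{0..<length p}. A (cycle_node p (Suc s)) (cycle_node p s))"
  unfolding cp_weight_def cycle_node_def lessThan_atLeast0 by (rule sum.cong) auto

locale zero_diag_idempotent =
  fixes n :: nat and E :: rmat
  assumes idempotent: "idempotent n E"
    and diag_zero: "\<forall>i<n. E i i = 0"
begin

lemma E_mats: "E \<in> mats n" and EE: "tmul n E E = E"
  using idempotent by (auto simp: idempotent_def)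

lemma triangle: "x < n \<Longrightarrow> y < n \<Longrightarrow> z < n \<Longrightarrow> E x y + E y z \<le> E x z"
  using tmul_ge[of x n y z E E] EE by simp

lemma two_cycle_le_0: "x < n \<Longrightarrow> y < n \<Longrightarrow> E x y + E y x \<le> 0"
  using triangle[of x y x] diag_zero by simp

lemma path_weight_le:
  assumes "\<forall>s\<le>b. q s < n" "a \<le> b"
  shows "(\<Sum>s\<in>{a..<b}. E (q (Suc s)) (q s)) \<le> E (q b) (q a)"
  using assms
proof (induction b)
  case 0
  then show ?case using diag_zero by simp
next
  case (Suc b)
  show ?case
  proof (cases "a = Suc b")
    case True
    then show ?thesis using diag_zero Suc.prems by simp
  next
    case False
    then have "a \<le> b" using Suc.prems by simp
    then have "(\<Sum>s\<in>{a..<Suc b}. E (q (Suc s)) (q s))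
        = (\<Sum>s\<in>{a..<b}. E (q (Suc s)) (q s)) + E (q (Suc b)) (q b)"
      by (simp add: sum.atLeastLessThan_Suc)
    also have "\<dots> \<le> E (q b) (q a) + E (q (Suc b)) (q b)"
      using Suc.IH Suc.prems \<open>a \<le> b\<close> by simp
    also have "\<dots> \<le> E (q (Suc b)) (q a)"
      using triangle[of "q (Suc b)" "q b" "q a"] Suc.prems \<open>a \<le> b\<close> by simp
    finally show ?thesis .
  qed
qed

lemma cp_weight_le_0:
  assumes "closed_path n p"
  shows "cp_weight E p \<le> 0"
proof -
  have "cp_weight E p \<le> E (cycle_node p (length p)) (cycle_node p 0)"
    unfolding cp_weight_cycle_node by (rule path_weight_le) (use cycle_node_lt[OF assms] in auto)
  also have "\<dots> = 0" using diag_zero cycle_node_lt[OF assms, of 0] by (simp add: cycle_node_def)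
  finally show ?thesis .
qed

text \<open>Splitting a closed path at one of its edges leaves a path in the opposite direction.\<close>

lemma cp_weight_le_two_cycle:
  assumes cp: "closed_path n p" and t: "t < length p"
  shows "cp_weight E p \<le> E (cycle_node p (Suc t)) (cycle_node p t) + E (cycle_node p t) (cycle_node p (Suc t))"
proof -
  let ?q = "cycle_node p" and ?m = "length p"
  let ?f = "\<lambda>s. E (?q (Suc s)) (?q s)"
  have "cp_weight E p = sum ?f {0..<t} + ?f t + sum ?f {Suc t..<?m}"
    unfolding cp_weight_cycle_node using t
    by (simp add: sum.atLeastLessThan_concat[symmetric, of 0 t ?m] sum.atLeast_Suc_lessThan)
  moreover have "sum ?f {0..<t} \<le> E (?q t) (?q 0)"
    by (rule path_weight_le) (use cycle_node_lt[OF cp] in auto)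
  moreover have "sum ?f {Suc t..<?m} \<le> E (?q 0) (?q (Suc t))"
  proof -
    have "sum ?f {Suc t..<?m} \<le> E (?q ?m) (?q (Suc t))"
      by (rule path_weight_le) (use cycle_node_lt[OF cp] t in auto)
    moreover have "?q ?m = ?q 0" by (simp add: cycle_node_def)
    ultimately show ?thesis by simp
  qed
  moreover have "E (?q t) (?q 0) + E (?q 0) (?q (Suc t)) \<le> E (?q t) (?q (Suc t))"
    using triangle cycle_node_lt[OF cp] by blast
  ultimately show ?thesis by linarith
qed

lemma max_cycle_mean_eq_0:
  assumes "0 < n"
  shows "max_cycle_mean n E = 0"
proof -
  have "closed_path n [0]" "cp_mean E [0] = 0"
    using assms diag_zero by (simp_all add: closed_path_def cp_mean_def cp_weight_def)
  then have "0 \<in> {cp_mean E p | p. closed_path n p}" by force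
  moreover have "x \<le> 0" if "x \<in> {cp_mean E p | p. closed_path n p}" for x
    using that cp_weight_le_0 by (auto simp: cp_mean_def divide_nonpos_nonneg)
  ultimately show ?thesis unfolding max_cycle_mean_def by (rule cSup_eq_maximum)
qed

lemma critical_path_iff: "critical_path n E p \<longleftrightarrow> closed_path n p \<and> cp_weight E p = 0"
proof -
  have "0 < n" if "closed_path n p"
    using cycle_node_lt[OF that, of 0] by simp
  then show ?thesis
    unfolding critical_path_def cp_mean_def
    using max_cycle_mean_eq_0 by (auto simp: closed_path_def)
qed

lemma critical_node_iff: "critical_node n E i \<longleftrightarrow> i < n"
proof
  assume "i < n"
  then have "critical_path n E [i]"
    using diag_zero by (simp add: critical_path_iff closed_path_def cp_weight_def)
  then show "critical_node n E i" unfolding critical_node_def by force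
qed (auto simp: critical_node_def critical_path_def closed_path_def)

lemma critical_edge_two_cycle:
  assumes "(j, i) \<in> critical_edges n E"
  shows "i < n \<and> j < n \<and> E i j + E j i = 0"
proof -
  obtain p t where cp: "critical_path n E p" and t: "t < length p"
    and "p ! t = j" "p ! ((t + 1) mod length p) = i"
    using assms unfolding critical_edges_def by auto
  then have j: "cycle_node p t = j" and i: "cycle_node p (Suc t) = i"
    by (simp_all add: cycle_node_def)
  have "closed_path n p" "cp_weight E p = 0" using cp critical_path_iff by auto
  then have "i < n" "j < n" "0 \<le> E i j + E j i"
    using cycle_node_lt[of n p] cp_weight_le_two_cycle[of p t] t i j by auto
  then show ?thesis using two_cycle_le_0[of i j] by auto
qed

lemma same_crit_class_iff:
  "same_crit_class n E x y \<longleftrightarrow> x < n \<and> y < n \<and> E x y + E y x = 0"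
proof
  assume S: "same_crit_class n E x y"
  then have x: "x < n" and y: "y < n" by (auto simp: same_crit_class_def critical_node_iff)
  have "(x, y) \<in> (critical_edges n E)\<^sup>*" using S by (simp add: same_crit_class_def)
  then have "0 \<le> E x y + E y x"
  proof (induction rule: rtrancl_induct)
    case base
    then show ?case using diag_zero x by simp
  next
    case (step y z)
    have e: "y < n" "z < n" "E z y + E y z = 0" using critical_edge_two_cycle[OF step.hyps(2)] by auto
    have "E x y + E y z \<le> E x z" "E z y + E y x \<le> E z x" using triangle x e by blast+
    then show ?case using step.IH e by linarith
  qed
  then show "x < n \<and> y < n \<and> E x y + E y x = 0" using two_cycle_le_0[OF x y] x y by simp
next
  assume H: "x < n \<and> y < n \<and> E x y + E y x = 0"
  then have "critical_path n E [y, x]"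
    by (simp add: critical_path_iff closed_path_def cp_weight_def numeral_2_eq_2 add.commute)
  then have "(x, y) \<in> critical_edges n E" "(y, x) \<in> critical_edges n E"
    unfolding critical_edges_def
    by (force intro!: exI[of _ "[y, x]"] exI[of _ "1::nat"],
        force intro!: exI[of _ "[y, x]"] exI[of _ "0::nat"])
  then show "same_crit_class n E x y"
    using H by (auto simp: same_crit_class_def critical_node_iff)
qed

end

definition submat :: "nat list \<Rightarrow> rmat \<Rightarrow> rmat" where
  "submat cs A = (\<lambda>i j. if i < length cs \<and> j < length cs then A (cs ! i) (cs ! j) else 0)"

lemma submat_in_mats: "submat cs A \<in> mats (length cs)"
  by (simp add: submat_def mats_def)

lemma emul_selmat_embed:
  "i < length cs \<Longrightarrow> cs ! i < n \<Longrightarrow> emul n (selmat cs) (embed A) i t = ereal (A (cs ! i) t)"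
  unfolding emul_def setcompr_lessThan_image by (rule Max_eqI) (auto simp: selmat_def embed_def)

lemma etrans_selmat: "etrans (selmat cs) t j = (if j < length cs \<and> t = cs ! j then 0 else -\<infinity>)"
  by (simp add: etrans_def selmat_def)

lemma emul_selmat_embed_selmat_trans:
  assumes "i < length cs" "j < length cs" "cs ! i < n" "cs ! j < n"
  shows "emul n (emul n (selmat cs) (embed A)) (etrans (selmat cs)) i j = ereal (A (cs ! i) (cs ! j))"
  unfolding emul_def[of n "emul n (selmat cs) (embed A)"] setcompr_lessThan_image
  by (rule Max_eqI) (use assms in \<open>auto simp: emul_selmat_embed etrans_selmat\<close>)

lemma phi_eq_submat:
  assumes "\<forall>i<length cs. cs ! i < n"
  shows "phi n cs = submat cs"
  using assms emul_selmat_embed_selmat_trans by (auto simp: fun_eq_iff phi_def submat_def)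

section \<open>The local monoid at \<open>E\<close> is a full matrix semigroup\<close>

locale critical_representatives = zero_diag_idempotent +
  fixes cs :: "nat list"
  assumes crit_reps: "crit_reps n E cs"
begin

abbreviation k :: nat where "k \<equiv> length cs"

abbreviation F :: rmat where "F \<equiv> submat cs E"

lemma reps_lt: "a < k \<Longrightarrow> cs ! a < n"
  using crit_reps critical_node_iff by (auto simp: crit_reps_def)

lemma reps_distinct_classes:
  "a < k \<Longrightarrow> b < k \<Longrightarrow> E (cs ! a) (cs ! b) + E (cs ! b) (cs ! a) = 0 \<Longrightarrow> a = b"
  using crit_reps same_crit_class_iff reps_lt by (auto simp: crit_reps_def)

lemma class_has_rep: "i < n \<Longrightarrow> \<exists>a<k. E i (cs ! a) + E (cs ! a) i = 0"
  using crit_reps critical_node_iff same_crit_class_iff unfolding crit_reps_def by blast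

definition rep_index :: "nat \<Rightarrow> nat" where
  "rep_index i = (SOME a. a < k \<and> E i (cs ! a) + E (cs ! a) i = 0)"

lemma rep_index:
  "i < n \<Longrightarrow> rep_index i < k \<and> E i (cs ! rep_index i) + E (cs ! rep_index i) i = 0"
  unfolding rep_index_def by (rule someI_ex) (rule class_has_rep)

lemma rep_index_rep: "a < k \<Longrightarrow> rep_index (cs ! a) = a"
  using rep_index[OF reps_lt] reps_distinct_classes by (metis add.commute)

text \<open>The inverse of \<open>submat cs\<close> on the local monoid: an entry \<open>(i, j)\<close> is routed through the
  representatives of the classes of \<open>i\<close> and \<open>j\<close>.\<close>

definition lift :: "rmat \<Rightarrow> rmat" where
  "lift G = (\<lambda>i j. if i < n \<and> j < n
     then E i (cs ! rep_index i) + G (rep_index i) (rep_index j) + E (cs ! rep_index j) j else 0)"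

lemma lift_in_mats: "lift G \<in> mats n"
  by (simp add: lift_def mats_def)

lemma lift_tmul: "tmul n (lift G) (lift U) = lift (tmul k G U)"
proof (intro ext)
  fix i j
  show "tmul n (lift G) (lift U) i j = lift (tmul k G U) i j"
  proof (cases "i < n \<and> j < n")
    case False
    then show ?thesis by (auto simp: tmul_def lift_def)
  next
    case True
    then have i: "i < n" and j: "j < n" by auto
    let ?a = "rep_index i" and ?b = "rep_index j"
    have a: "?a < k" and b: "?b < k" using rep_index i j by auto
    obtain c where c: "c < k" "tmul k G U ?a ?b = G ?a c + U c ?b"
      using tmul_attained[OF a b] by blast
    show ?thesis
    proof (rule tmul_eqI[OF i j])
      fix t assume t: "t < n"
      have "G ?a (rep_index t) + U (rep_index t) ?b \<le> tmul k G U ?a ?b"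
        using tmul_ge[OF a _ b] rep_index[OF t] by blast
      then show "lift G i t + lift U t j \<le> lift (tmul k G U) i j"
        using i j t rep_index[OF t] by (simp add: lift_def)
    next
      show "cs ! c < n" by (rule reps_lt[OF c(1)])
      show "lift G i (cs ! c) + lift U (cs ! c) j = lift (tmul k G U) i j"
        using i j c reps_lt rep_index_rep diag_zero by (simp add: lift_def)
    qed
  qed
qed

lemma submat_lift: "G \<in> mats k \<Longrightarrow> submat cs (lift G) = G"
  by (intro ext) (auto simp: submat_def lift_def mats_def reps_lt rep_index_rep diag_zero)

lemma lift_submat:
  assumes "A \<in> local_monoid n E"
  shows "lift (submat cs A) = A"
proof (intro ext)
  fix i j
  have A: "A \<in> mats n" "tmul n E A = A" "tmul n A E = A"
    using assms by (auto simp: local_monoid_def)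
  show "lift (submat cs A) i j = A i j"
  proof (cases "i < n \<and> j < n")
    case False
    then show ?thesis using A by (auto simp: lift_def mats_def)
  next
    case True
    then have i: "i < n" and j: "j < n" by auto
    let ?a = "rep_index i" and ?b = "rep_index j"
    have a: "?a < k" "E i (cs ! ?a) + E (cs ! ?a) i = 0"
      and b: "?b < k" "E j (cs ! ?b) + E (cs ! ?b) j = 0" using rep_index i j by auto
    have ca: "cs ! ?a < n" and cb: "cs ! ?b < n" using reps_lt a b by auto
    have "E i (cs ! ?a) + A (cs ! ?a) (cs ! ?b) \<le> A i (cs ! ?b)"
      and "A i (cs ! ?b) + E (cs ! ?b) j \<le> A i j"
      and "E (cs ! ?a) i + A i j \<le> A (cs ! ?a) j"
      and "A (cs ! ?a) j + E j (cs ! ?b) \<le> A (cs ! ?a) (cs ! ?b)"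
      using tmul_ge[OF i ca cb, of E A] tmul_ge[OF i cb j, of A E]
        tmul_ge[OF ca i j, of E A] tmul_ge[OF ca j cb, of A E] A by simp_all
    then show ?thesis using i j a b by (simp add: lift_def submat_def)
  qed
qed

lemma E_in_local_monoid: "E \<in> local_monoid n E"
  using E_mats EE by (simp add: local_monoid_def)

lemma lift_F: "lift F = E"
  by (rule lift_submat[OF E_in_local_monoid])

lemma submat_tmul:
  assumes "A \<in> local_monoid n E" "B \<in> local_monoid n E"
  shows "submat cs (tmul n A B) = tmul k (submat cs A) (submat cs B)"
proof -
  have "tmul n A B = lift (tmul k (submat cs A) (submat cs B))"
    using lift_tmul lift_submat[OF assms(1)] lift_submat[OF assms(2)] by metis
  then show ?thesis using submat_lift tmul_in_mats by simp
qed

lemma F_idempotent: "idempotent k F"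
  using submat_in_mats submat_tmul[OF E_in_local_monoid E_in_local_monoid] EE
  by (simp add: idempotent_def)

lemma F_diag: "\<forall>a<k. F a a = 0"
  using diag_zero reps_lt by (simp add: submat_def)

lemma F_two_cycle_neg: "\<forall>a<k. \<forall>b<k. a \<noteq> b \<longrightarrow> F a b + F b a < 0"
proof (intro allI impI)
  fix a b assume ab: "a < k" "b < k" "a \<noteq> b"
  then have "E (cs ! a) (cs ! b) + E (cs ! b) (cs ! a) \<le> 0"
    and "E (cs ! a) (cs ! b) + E (cs ! b) (cs ! a) \<noteq> 0"
    using two_cycle_le_0 reps_lt reps_distinct_classes by blast+
  then show "F a b + F b a < 0" using ab by (simp add: submat_def)
qed

lemma submat_local_monoid: "A \<in> local_monoid n E \<Longrightarrow> submat cs A \<in> local_monoid k F"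
  using submat_tmul[OF E_in_local_monoid] submat_tmul[OF _ E_in_local_monoid] submat_in_mats
  by (simp add: local_monoid_def)

lemma lift_local_monoid: "G \<in> local_monoid k F \<Longrightarrow> lift G \<in> local_monoid n E"
  using lift_tmul[of F G] lift_tmul[of G F] lift_F lift_in_mats by (simp add: local_monoid_def)

lemma submat_Hclass: "A \<in> Hclass n E \<Longrightarrow> submat cs A \<in> Hclass k F"
  unfolding Hclass_iff_unit_of_local_monoid[OF idempotent] Hclass_iff_unit_of_local_monoid[OF F_idempotent]
  by (metis submat_local_monoid submat_tmul)

lemma lift_Hclass: "G \<in> Hclass k F \<Longrightarrow> lift G \<in> Hclass n E"
  unfolding Hclass_iff_unit_of_local_monoid[OF idempotent] Hclass_iff_unit_of_local_monoid[OF F_idempotent]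
  by (metis lift_local_monoid lift_tmul lift_F)

lemma submat_bij_betw_Hclass: "bij_betw (submat cs) (Hclass n E) (Hclass k F)"
proof (rule bij_betw_byWitness[where f' = lift])
  show "\<forall>A\<in>Hclass n E. lift (submat cs A) = A"
    using lift_submat Hclass_subset_local_monoid[OF idempotent] by blast
  show "\<forall>G\<in>Hclass k F. submat cs (lift G) = G"
    using submat_lift by (simp add: Hclass_def)
  show "submat cs ` Hclass n E \<subseteq> Hclass k F" using submat_Hclass by blast
  show "lift ` Hclass k F \<subseteq> Hclass n E" using lift_Hclass by blast
qed

end

theorem theorem6p3:
  fixes n :: nat and E :: rmat and cs :: "nat list"
  assumes "0 < n"
    and "idempotent n E"
    and "\<forall>i < n. E i i = 0"
    and "crit_reps n E cs"
  defines "k \<equiv> length cs"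
    and "F \<equiv> phi n cs E"
  shows "(\<forall>A \<in> mats n. \<forall>i < k. \<forall>j < k.
            emul n (emul n (selmat cs) (embed A)) (etrans (selmat cs)) i j = ereal (A (cs ! i) (cs ! j)))
     \<and> F \<in> mats k \<and> idempotent k F \<and> trank k F = k
     \<and> bij_betw (phi n cs) (Hclass n E) (Hclass k F)
     \<and> (\<forall>A \<in> Hclass n E. \<forall>B \<in> Hclass n E. phi n cs (tmul n A B) = tmul k (phi n cs A) (phi n cs B))"
proof -
  interpret c: critical_representatives n E cs
    using assms(2-4) by unfold_locales
  have phi: "phi n cs = submat cs" by (rule phi_eq_submat) (use c.reps_lt in blast)
  have "trank k F = k"
    unfolding k_def F_def phi
    using trank_eq_dim[OF submat_in_mats c.F_diag c.F_two_cycle_neg] .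
  moreover have "phi n cs (tmul n A B) = tmul k (phi n cs A) (phi n cs B)"
    if "A \<in> Hclass n E" "B \<in> Hclass n E" for A B
    using that c.submat_tmul Hclass_subset_local_monoid[OF c.idempotent]
    unfolding k_def phi by blast
  ultimately show ?thesis
    using emul_selmat_embed_selmat_trans c.reps_lt submat_in_mats c.F_idempotent
      c.submat_bij_betw_Hclass
    unfolding k_def F_def phi by blast
qed

end
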